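(* Let $\mathfrak{M}=(S,\mathcal{L})$ be a Veblenian gamma space all of whose lines have at least $3$ points, and let $\mathcal{H}$ be a flappy hyperplane of $\mathfrak{M}$. Then for all pairwise distinct points $p_1,p_2,p_3\in\mathcal{H}$: $p_1,p_2,p_3$ lie on a common line of $\mathfrak{M}$ if and only if there exist points $a_1,a_2,a_3\in S\setminus\mathcal{H}$ such that for every permutation $(i,j,k)$ of $(1,2,3)$ the points $a_i,a_j$ are distinct and collinear and $p_k$ lies on the line through $a_i$ and $a_j$. Equivalently, in terms of the complement: for lines $L_1,L_2,L_3$ of $\mathfrak{M}$ not contained in $\mathcal{H}$ with pairwise distinct points $L_1^\infty,L_2^\infty,L_3^\infty$, these three points are collinear in $\mathfrak{M}$ if and only if there is a triangle in $\mathfrak{M}\setminus\mathcal{H}$ with sides $K_1,K_2,K_3$ such that $K_i\parallel_\mathcal{H} L_i$ for $i=1,2,3$.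
   Context: A partial linear space is a pair $(S,\mathcal{L})$ of points and lines such that every line has at least two points, every point is on a line, and two distinct lines share at most one point; points are collinear ($a\sim b$) if some line contains both; $[a]_\sim$ is the set of points collinear with $a$. A subspace is a set $X$ such that every line meeting $X$ in at least two points lies in $X$; a hyperplane is a proper subspace meeting every line. A gamma space is a partial linear space where $[a]_\sim$ is a subspace for every point $a$. It is Veblenian if for any two distinct lines $L_1,L_2$ through a point $p$ and any two distinct lines $K_1,K_2$ not through $p$ such that each $K_j$ meets both $L_1,L_2$, the lines $K_1,K_2$ meet. A hyperplane $X$ is flappy if for every line $L\subseteq X$ there is a point $a\notin X$ with $L\subseteq[a]_\sim$. A triangle is a triple of pairwise distinct, pairwise collinear points not on a common line. For a hyperplane $\mathcal{H}$, each line $L\not\subseteq\mathcal{H}$ meets $\mathcal{H}$ in a unique point $L^\infty$; the complement $\mathfrak{M}\setminus\mathcal{H}$ has points $S\setminus\mathcal{H}$, lines $L\setminus\mathcal{H}$ ($L\not\subseteq\mathcal{H}$), and parallelism $L\parallel_\mathcal{H}K$ iff $L^\infty=K^\infty$. *)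

theory Defs
  imports Main
begin

definition partial_linear_space :: "'a set \<Rightarrow> 'a set set \<Rightarrow> bool" where
  "partial_linear_space S Ls \<longleftrightarrow>
     (\<forall>L\<in>Ls. L \<subseteq> S \<and> (\<exists>x y. x \<in> L \<and> y \<in> L \<and> x \<noteq> y)) \<and>
     (\<forall>a\<in>S. \<exists>L\<in>Ls. a \<in> L) \<and>
     (\<forall>L\<in>Ls. \<forall>K\<in>Ls. L \<noteq> K \<longrightarrow> (\<forall>x y. x \<in> L \<inter> K \<and> y \<in> L \<inter> K \<longrightarrow> x = y))"

definition collinear :: "'a set set \<Rightarrow> 'a \<Rightarrow> 'a \<Rightarrow> bool" where
  "collinear Ls a b \<longleftrightarrow> (\<exists>L\<in>Ls. a \<in> L \<and> b \<in> L)"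

definition coll_class :: "'a set \<Rightarrow> 'a set set \<Rightarrow> 'a \<Rightarrow> 'a set" where
  "coll_class S Ls a = {b \<in> S. collinear Ls a b}"

definition subspace :: "'a set \<Rightarrow> 'a set set \<Rightarrow> 'a set \<Rightarrow> bool" where
  "subspace S Ls X \<longleftrightarrow> X \<subseteq> S \<and>
     (\<forall>L\<in>Ls. (\<exists>x y. x \<in> L \<inter> X \<and> y \<in> L \<inter> X \<and> x \<noteq> y) \<longrightarrow> L \<subseteq> X)"

definition hyperplane :: "'a set \<Rightarrow> 'a set set \<Rightarrow> 'a set \<Rightarrow> bool" where
  "hyperplane S Ls X \<longleftrightarrow> subspace S Ls X \<and> X \<noteq> S \<and> (\<forall>L\<in>Ls. L \<inter> X \<noteq> {})"

definition gamma_space :: "'a set \<Rightarrow> 'a set set \<Rightarrow> bool" where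
  "gamma_space S Ls \<longleftrightarrow> partial_linear_space S Ls \<and>
     (\<forall>a\<in>S. subspace S Ls (coll_class S Ls a))"

definition veblenian :: "'a set \<Rightarrow> 'a set set \<Rightarrow> bool" where
  "veblenian S Ls \<longleftrightarrow>
     (\<forall>p L1 L2 K1 K2. L1 \<in> Ls \<and> L2 \<in> Ls \<and> L1 \<noteq> L2 \<and> p \<in> L1 \<and> p \<in> L2 \<and>
        K1 \<in> Ls \<and> K2 \<in> Ls \<and> K1 \<noteq> K2 \<and> p \<notin> K1 \<and> p \<notin> K2 \<and>
        K1 \<inter> L1 \<noteq> {} \<and> K1 \<inter> L2 \<noteq> {} \<and> K2 \<inter> L1 \<noteq> {} \<and> K2 \<inter> L2 \<noteq> {}
        \<longrightarrow> K1 \<inter> K2 \<noteq> {})"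

definition flappy :: "'a set \<Rightarrow> 'a set set \<Rightarrow> 'a set \<Rightarrow> bool" where
  "flappy S Ls X \<longleftrightarrow> hyperplane S Ls X \<and>
     (\<forall>L\<in>Ls. L \<subseteq> X \<longrightarrow> (\<exists>a\<in>S - X. L \<subseteq> coll_class S Ls a))"

definition triangle :: "'a set set \<Rightarrow> 'a \<Rightarrow> 'a \<Rightarrow> 'a \<Rightarrow> bool" where
  "triangle Ls a b c \<longleftrightarrow> a \<noteq> b \<and> b \<noteq> c \<and> a \<noteq> c \<and>
     collinear Ls a b \<and> collinear Ls b c \<and> collinear Ls a c \<and>
     \<not> (\<exists>L\<in>Ls. a \<in> L \<and> b \<in> L \<and> c \<in> L)"

text \<open>Complement of a hyperplane H: points S - H, lines L - H for lines L not inside H.\<close>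
definition compl_lines :: "'a set set \<Rightarrow> 'a set \<Rightarrow> 'a set set" where
  "compl_lines Ls H = {L - H | L. L \<in> Ls \<and> \<not> L \<subseteq> H}"

definition inf_pt :: "'a set \<Rightarrow> 'a set \<Rightarrow> 'a" where
  "inf_pt H L = (THE p. p \<in> L \<inter> H)"

text \<open>Parallelism in the complement, phrased via the lines of M: L \<parallel> K iff L^\<infinity> = K^\<infinity>.\<close>
definition hpar :: "'a set \<Rightarrow> 'a set \<Rightarrow> 'a set \<Rightarrow> bool" where
  "hpar H K L \<longleftrightarrow> inf_pt H K = inf_pt H L"

end

theory Submission
  imports Defs
begin

text \<open>
  Forward direction: if \<open>p\<^sub>1, p\<^sub>2, p\<^sub>3\<close> lie on a line \<open>L \<subseteq> H\<close>, flappiness gives a point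
  \<open>a \<notin> H\<close> collinear with all of \<open>L\<close>. Take \<open>a\<^sub>1 \<noteq> a, p\<^sub>2\<close> on the line \<open>a p\<^sub>2\<close> (thickness); by the
  gamma property \<open>p\<^sub>3\<close> is collinear with \<open>a\<^sub>1\<close>, and Veblen's axiom applied to the lines \<open>L\<close>, \<open>a p\<^sub>2\<close>
  through \<open>p\<^sub>2\<close> makes \<open>a\<^sub>1 p\<^sub>3\<close> meet \<open>a p\<^sub>1\<close> in a third vertex \<open>a\<^sub>2\<close>.
  Backward direction: the gamma property makes \<open>p\<^sub>1\<close> collinear with \<open>a\<^sub>1\<close> and then with \<open>p\<^sub>2\<close>;
  Veblen's axiom at \<open>a\<^sub>3\<close> forces the line \<open>p\<^sub>1 p\<^sub>2 \<subseteq> H\<close> to meet the side \<open>a\<^sub>1 a\<^sub>2\<close>, necessarily in \<open>p\<^sub>3\<close>.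
  The second statement is the first one read through \<open>L \<parallel>\<^sub>H K \<longleftrightarrow> L\<^sup>\<infinity> \<in> K\<close>.
\<close>

definition affine_triangle_through :: "'a set \<Rightarrow> 'a set set \<Rightarrow> 'a set \<Rightarrow> 'a \<Rightarrow> 'a \<Rightarrow> 'a \<Rightarrow> bool" where
  "affine_triangle_through S Ls H p1 p2 p3 \<longleftrightarrow>
     (\<exists>a1 a2 a3. a1 \<in> S - H \<and> a2 \<in> S - H \<and> a3 \<in> S - H \<and>
        a1 \<noteq> a2 \<and> a2 \<noteq> a3 \<and> a1 \<noteq> a3 \<and>
        (\<exists>L\<in>Ls. a2 \<in> L \<and> a3 \<in> L \<and> p1 \<in> L) \<and>
        (\<exists>L\<in>Ls. a1 \<in> L \<and> a3 \<in> L \<and> p2 \<in> L) \<and>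
        (\<exists>L\<in>Ls. a1 \<in> L \<and> a2 \<in> L \<and> p3 \<in> L))"

definition parallel_affine_triangle ::
    "'a set \<Rightarrow> 'a set set \<Rightarrow> 'a set \<Rightarrow> 'a set \<Rightarrow> 'a set \<Rightarrow> 'a set \<Rightarrow> bool" where
  "parallel_affine_triangle S Ls H L1 L2 L3 \<longleftrightarrow>
     (\<exists>a1 a2 a3 K1 K2 K3.
        a1 \<in> S - H \<and> a2 \<in> S - H \<and> a3 \<in> S - H \<and>
        triangle (compl_lines Ls H) a1 a2 a3 \<and>
        K1 \<in> Ls \<and> K2 \<in> Ls \<and> K3 \<in> Ls \<and>
        \<not> K1 \<subseteq> H \<and> \<not> K2 \<subseteq> H \<and> \<not> K3 \<subseteq> H \<and>
        a2 \<in> K1 - H \<and> a3 \<in> K1 - H \<and>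
        a1 \<in> K2 - H \<and> a3 \<in> K2 - H \<and>
        a1 \<in> K3 - H \<and> a2 \<in> K3 - H \<and>
        hpar H K1 L1 \<and> hpar H K2 L2 \<and> hpar H K3 L3)"

lemma partial_linear_space_line_eq:
  assumes "partial_linear_space S Ls" "L \<in> Ls" "K \<in> Ls"
    and "x \<in> L" "y \<in> L" "x \<in> K" "y \<in> K" "x \<noteq> y"
  shows "L = K"
  using assms unfolding partial_linear_space_def by blast

lemma partial_linear_space_line_subset:
  "partial_linear_space S Ls \<Longrightarrow> L \<in> Ls \<Longrightarrow> L \<subseteq> S"
  unfolding partial_linear_space_def by simp

lemma gamma_space_partial_linear_space: "gamma_space S Ls \<Longrightarrow> partial_linear_space S Ls"
  unfolding gamma_space_def by simp

lemma flappy_hyperplane: "flappy S Ls H \<Longrightarrow> hyperplane S Ls H"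
  unfolding flappy_def by simp

lemma hyperplane_subset: "hyperplane S Ls H \<Longrightarrow> H \<subseteq> S"
  unfolding hyperplane_def subspace_def by simp

lemma hyperplane_line_subset:
  assumes "hyperplane S Ls H" "L \<in> Ls" "x \<in> L" "y \<in> L" "x \<in> H" "y \<in> H" "x \<noteq> y"
  shows "L \<subseteq> H"
  using assms unfolding hyperplane_def subspace_def by blast

lemma hyperplane_line_inter_eq:
  assumes "hyperplane S Ls H" "L \<in> Ls" "\<not> L \<subseteq> H" "x \<in> L" "x \<in> H" "y \<in> L" "y \<in> H"
  shows "x = y"
  using hyperplane_line_subset[of S Ls H L x y] assms by blast

lemma inf_pt_eq:
  assumes "hyperplane S Ls H" "L \<in> Ls" "\<not> L \<subseteq> H" "p \<in> L" "p \<in> H"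
  shows "inf_pt H L = p"
  unfolding inf_pt_def using assms hyperplane_line_inter_eq[OF assms(1-3)] by blast

lemma inf_pt_mem:
  assumes "hyperplane S Ls H" "L \<in> Ls" "\<not> L \<subseteq> H"
  shows "inf_pt H L \<in> L" "inf_pt H L \<in> H"
proof -
  obtain p where "p \<in> L" "p \<in> H"
    using assms(1,2) unfolding hyperplane_def by blast
  then show "inf_pt H L \<in> L" "inf_pt H L \<in> H"
    using inf_pt_eq[OF assms] by simp_all
qed

lemma hpar_iff:
  assumes "hyperplane S Ls H" "K \<in> Ls" "\<not> K \<subseteq> H" "L \<in> Ls" "\<not> L \<subseteq> H"
  shows "hpar H K L \<longleftrightarrow> inf_pt H L \<in> K"
  using inf_pt_mem[OF assms(1,2,3)] inf_pt_mem[OF assms(1,4,5)] inf_pt_eq[OF assms(1,2,3)]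
  unfolding hpar_def by metis

lemma gamma_space_collinear_line:
  assumes "gamma_space S Ls" "a \<in> S" "L \<in> Ls" "x \<in> L" "y \<in> L" "x \<noteq> y"
    and "collinear Ls a x" "collinear Ls a y" "z \<in> L"
  shows "collinear Ls a z"
proof -
  have "subspace S Ls (coll_class S Ls a)"
    using assms(1,2) unfolding gamma_space_def by simp
  moreover have "L \<subseteq> S"
    using assms(1,3) partial_linear_space_line_subset gamma_space_partial_linear_space by blast
  ultimately have "L \<subseteq> coll_class S Ls a"
    using assms(3-8) unfolding subspace_def coll_class_def by blast
  then show ?thesis using assms(9) unfolding coll_class_def by blast
qed

lemma veblenianD:
  assumes "veblenian S Ls" "L1 \<in> Ls" "L2 \<in> Ls" "L1 \<noteq> L2" "p \<in> L1" "p \<in> L2"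
    and "K1 \<in> Ls" "K2 \<in> Ls" "K1 \<noteq> K2" "p \<notin> K1" "p \<notin> K2"
    and "x1 \<in> K1 \<inter> L1" "x2 \<in> K1 \<inter> L2" "y1 \<in> K2 \<inter> L1" "y2 \<in> K2 \<inter> L2"
  obtains z where "z \<in> K1" "z \<in> K2"
proof -
  have "K1 \<inter> K2 \<noteq> {}"
    using assms(1) unfolding veblenian_def
    by (rule allE[of _ p], elim allE[of _ L1] allE[of _ L2] allE[of _ K1] allE[of _ K2])
      (use assms(2-15) in blast)
  then show thesis using that by blast
qed

lemma compl_lines_ex_superset_iff:
  assumes "A \<noteq> {}" "A \<inter> H = {}"
  shows "(\<exists>M\<in>compl_lines Ls H. A \<subseteq> M) \<longleftrightarrow> (\<exists>L\<in>Ls. A \<subseteq> L)"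
proof
  assume "\<exists>M\<in>compl_lines Ls H. A \<subseteq> M"
  then show "\<exists>L\<in>Ls. A \<subseteq> L" unfolding compl_lines_def by blast
next
  assume "\<exists>L\<in>Ls. A \<subseteq> L"
  then obtain L where L: "L \<in> Ls" "A \<subseteq> L" by blast
  with assms have "L - H \<in> compl_lines Ls H"
    unfolding compl_lines_def by blast
  moreover have "A \<subseteq> L - H" using L(2) assms(2) by blast
  ultimately show "\<exists>M\<in>compl_lines Ls H. A \<subseteq> M" by blast
qed

lemma triangle_compl_lines_iff:
  assumes "a1 \<notin> H" "a2 \<notin> H" "a3 \<notin> H"
  shows "triangle (compl_lines Ls H) a1 a2 a3 \<longleftrightarrow> triangle Ls a1 a2 a3"
proof -
  have "\<And>A. A \<subseteq> {a1, a2, a3} \<Longrightarrow> A \<inter> H = {}" using assms by blast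
  note sup_iff = compl_lines_ex_superset_iff[of "{a1, a2}" H Ls, OF _ this]
    compl_lines_ex_superset_iff[of "{a2, a3}" H Ls, OF _ this]
    compl_lines_ex_superset_iff[of "{a1, a3}" H Ls, OF _ this]
    compl_lines_ex_superset_iff[of "{a1, a2, a3}" H Ls, OF _ this]
  show ?thesis unfolding triangle_def collinear_def using sup_iff by simp
qed

lemma collinear_imp_affine_triangle_through:
  assumes gamma: "gamma_space S Ls" and veb: "veblenian S Ls"
    and thick: "\<forall>L\<in>Ls. \<exists>x y z. x \<in> L \<and> y \<in> L \<and> z \<in> L \<and> x \<noteq> y \<and> y \<noteq> z \<and> x \<noteq> z"
    and flap: "flappy S Ls H"
    and p: "p1 \<in> H" "p2 \<in> H" "p3 \<in> H" "p1 \<noteq> p2" "p2 \<noteq> p3" "p1 \<noteq> p3"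
    and L: "L \<in> Ls" "p1 \<in> L" "p2 \<in> L" "p3 \<in> L"
  shows "affine_triangle_through S Ls H p1 p2 p3"
proof -
  have pls: "partial_linear_space S Ls" using gamma by (rule gamma_space_partial_linear_space)
  have hyp: "hyperplane S Ls H" using flap by (rule flappy_hyperplane)
  have "L \<subseteq> H" using hyperplane_line_subset[OF hyp L(1,2,3)] p by blast
  then obtain a where a: "a \<in> S - H" "L \<subseteq> coll_class S Ls a"
    using flap L(1) unfolding flappy_def by blast
  have a_coll: "collinear Ls a x" if "x \<in> L" for x
    using a(2) that unfolding coll_class_def by blast
  obtain M1 where M1: "M1 \<in> Ls" "a \<in> M1" "p1 \<in> M1"
    using a_coll[OF L(2)] unfolding collinear_def by blast
  obtain M2 where M2: "M2 \<in> Ls" "a \<in> M2" "p2 \<in> M2"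
    using a_coll[OF L(3)] unfolding collinear_def by blast
  have M1_off: "\<not> M1 \<subseteq> H" and M2_off: "\<not> M2 \<subseteq> H" using M1 M2 a by auto
  obtain a1 where a1: "a1 \<in> M2" "a1 \<noteq> a" "a1 \<noteq> p2"
  proof -
    obtain x y z where "x \<in> M2" "y \<in> M2" "z \<in> M2" "x \<noteq> y" "y \<noteq> z" "x \<noteq> z"
      using thick M2(1) by blast
    then show thesis using that by metis
  qed
  have a1_off: "a1 \<notin> H" using hyperplane_line_inter_eq[OF hyp M2(1) M2_off a1(1) _ M2(3)] p a1 by blast
  have "collinear Ls p3 a1"
  proof (rule gamma_space_collinear_line[OF gamma _ M2(1) M2(2) M2(3) _ _ _ a1(1)])
    show "p3 \<in> S" using hyperplane_subset[OF hyp] p by blast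
    show "a \<noteq> p2" using a p by blast
    show "collinear Ls p3 a" using a_coll[OF L(4)] unfolding collinear_def by blast
    show "collinear Ls p3 p2" using L unfolding collinear_def by blast
  qed
  then obtain N where N: "N \<in> Ls" "p3 \<in> N" "a1 \<in> N" unfolding collinear_def by blast
  have N_off: "\<not> N \<subseteq> H" using N a1_off by blast
  have N_H: "x = p3" if "x \<in> N" "x \<in> H" for x
    using hyperplane_line_inter_eq[OF hyp N(1) N_off that N(2)] p by blast
  have M1_H: "x = p1" if "x \<in> M1" "x \<in> H" for x
    using hyperplane_line_inter_eq[OF hyp M1(1) M1_off that M1(3)] p by blast
  have M2_H: "x = p2" if "x \<in> M2" "x \<in> H" for x
    using hyperplane_line_inter_eq[OF hyp M2(1) M2_off that M2(3)] p by blast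
  obtain a2 where a2: "a2 \<in> N" "a2 \<in> M1"
  proof (rule veblenianD[OF veb L(1) M2(1) _ L(3) M2(3) N(1) M1(1)])
    show "L \<noteq> M2" using \<open>L \<subseteq> H\<close> M2_off by blast
    show "N \<noteq> M1" using M1_H N p by blast
    show "p2 \<notin> N" "p2 \<notin> M1" using N_H M1_H p by blast+
    show "p3 \<in> N \<inter> L" "a1 \<in> N \<inter> M2" "p1 \<in> M1 \<inter> L" "a \<in> M1 \<inter> M2"
      using N L M1 M2 a1 by blast+
  qed
  have "a2 \<notin> H" using N_H M1_H a2 p by metis
  moreover have "a2 \<in> S" using partial_linear_space_line_subset[OF pls N(1)] a2 by blast
  moreover have "a1 \<in> S" using partial_linear_space_line_subset[OF pls M2(1)] a1 by blast
  moreover have "a2 \<noteq> a"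
  proof
    assume "a2 = a"
    then have "N = M2" using partial_linear_space_line_eq[OF pls N(1) M2(1)] a2 a1 M2 N by blast
    then show False using M2_H N p by blast
  qed
  moreover have "a1 \<noteq> a2"
  proof
    assume "a1 = a2"
    then have "M1 = M2" using partial_linear_space_line_eq[OF pls M1(1) M2(1)] a2 a1 M1 M2 by blast
    then show False using M2_H M1 p by blast
  qed
  ultimately show ?thesis
    unfolding affine_triangle_through_def using a(1) a1 a1_off a2 M1 M2 N by blast
qed

lemma affine_triangle_through_imp_collinear:
  assumes gamma: "gamma_space S Ls" and veb: "veblenian S Ls" and hyp: "hyperplane S Ls H"
    and p: "p1 \<in> H" "p2 \<in> H" "p3 \<in> H" "p1 \<noteq> p2" "p2 \<noteq> p3" "p1 \<noteq> p3"
    and tri: "affine_triangle_through S Ls H p1 p2 p3"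
  shows "\<exists>L\<in>Ls. p1 \<in> L \<and> p2 \<in> L \<and> p3 \<in> L"
proof -
  have pls: "partial_linear_space S Ls" using gamma by (rule gamma_space_partial_linear_space)
  obtain a1 a2 a3 N1 N2 N3 where a: "a1 \<in> S - H" "a2 \<in> S - H" "a3 \<in> S - H"
      "a1 \<noteq> a2" "a2 \<noteq> a3" "a1 \<noteq> a3"
    and N1: "N1 \<in> Ls" "a2 \<in> N1" "a3 \<in> N1" "p1 \<in> N1"
    and N2: "N2 \<in> Ls" "a1 \<in> N2" "a3 \<in> N2" "p2 \<in> N2"
    and N3: "N3 \<in> Ls" "a1 \<in> N3" "a2 \<in> N3" "p3 \<in> N3"
    using tri unfolding affine_triangle_through_def by blast
  have N3_off: "\<not> N3 \<subseteq> H" using N3 a by blast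
  have "collinear Ls a1 p1"
  proof (rule gamma_space_collinear_line[OF gamma _ N1(1) N1(2) N1(3) a(5) _ _ N1(4)])
    show "a1 \<in> S" using a by blast
    show "collinear Ls a1 a2" "collinear Ls a1 a3" using N2 N3 unfolding collinear_def by blast+
  qed
  have "collinear Ls p1 p2"
  proof (rule gamma_space_collinear_line[OF gamma _ N2(1) N2(2) N2(3) a(6) _ _ N2(4)])
    show "p1 \<in> S" using hyperplane_subset[OF hyp] p by blast
    show "collinear Ls p1 a1" using \<open>collinear Ls a1 p1\<close> unfolding collinear_def by blast
    show "collinear Ls p1 a3" using N1 unfolding collinear_def by blast
  qed
  then obtain L where L: "L \<in> Ls" "p1 \<in> L" "p2 \<in> L" unfolding collinear_def by blast
  have L_H: "L \<subseteq> H" using hyperplane_line_subset[OF hyp L] p by blast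
  obtain z where z: "z \<in> L" "z \<in> N3"
  proof (rule veblenianD[OF veb N1(1) N2(1) _ N1(3) N2(3) L(1) N3(1)])
    show "N1 \<noteq> N2"
      using hyperplane_line_subset[OF hyp N1(1) N1(4), of p2] N1 N2 p a by blast
    show "L \<noteq> N3" "a3 \<notin> L" using L_H N3_off a by blast+
    show "a3 \<notin> N3"
    proof
      assume "a3 \<in> N3"
      then have "N3 = N2" using partial_linear_space_line_eq[OF pls N3(1) N2(1)] N3 N2 a by blast
      then show False using hyperplane_line_inter_eq[OF hyp N3(1) N3_off] N2 N3 p by blast
    qed
    show "p1 \<in> L \<inter> N1" "p2 \<in> L \<inter> N2" "a2 \<in> N3 \<inter> N1" "a1 \<in> N3 \<inter> N2"
      using L N1 N2 N3 by blast+
  qed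
  have "z = p3" using hyperplane_line_inter_eq[OF hyp N3(1) N3_off z(2) _ N3(4)] z L_H p by blast
  then show ?thesis using L z by blast
qed

lemma affine_triangle_through_inf_pt_iff:
  assumes pls: "partial_linear_space S Ls" and hyp: "hyperplane S Ls H"
    and L: "L1 \<in> Ls" "L2 \<in> Ls" "L3 \<in> Ls" "\<not> L1 \<subseteq> H" "\<not> L2 \<subseteq> H" "\<not> L3 \<subseteq> H"
    and q13: "inf_pt H L1 \<noteq> inf_pt H L3"
  shows "affine_triangle_through S Ls H (inf_pt H L1) (inf_pt H L2) (inf_pt H L3) \<longleftrightarrow>
    parallel_affine_triangle S Ls H L1 L2 L3"
proof
  assume "affine_triangle_through S Ls H (inf_pt H L1) (inf_pt H L2) (inf_pt H L3)"
  then obtain a1 a2 a3 N1 N2 N3 where a: "a1 \<in> S - H" "a2 \<in> S - H" "a3 \<in> S - H"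
      "a1 \<noteq> a2" "a2 \<noteq> a3" "a1 \<noteq> a3"
    and N1: "N1 \<in> Ls" "a2 \<in> N1" "a3 \<in> N1" "inf_pt H L1 \<in> N1"
    and N2: "N2 \<in> Ls" "a1 \<in> N2" "a3 \<in> N2" "inf_pt H L2 \<in> N2"
    and N3: "N3 \<in> Ls" "a1 \<in> N3" "a2 \<in> N3" "inf_pt H L3 \<in> N3"
    unfolding affine_triangle_through_def by blast
  have N_off: "\<not> N1 \<subseteq> H" "\<not> N2 \<subseteq> H" "\<not> N3 \<subseteq> H" using a N1 N2 N3 by auto
  have "\<not> (\<exists>M\<in>Ls. a1 \<in> M \<and> a2 \<in> M \<and> a3 \<in> M)"
  proof
    assume "\<exists>M\<in>Ls. a1 \<in> M \<and> a2 \<in> M \<and> a3 \<in> M"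
    then obtain M where M: "M \<in> Ls" "a1 \<in> M" "a2 \<in> M" "a3 \<in> M" by blast
    have "N1 = N3"
      using partial_linear_space_line_eq[OF pls M(1) N1(1)] partial_linear_space_line_eq[OF pls M(1) N3(1)]
        M N1 N3 a by metis
    then show False
      using hyperplane_line_inter_eq[OF hyp N1(1) N_off(1) N1(4)] N3(4) q13
        inf_pt_mem(2)[OF hyp L(1,4)] inf_pt_mem(2)[OF hyp L(3,6)] by blast
  qed
  with a(4-6) N1(1-3) N2(1-3) N3(1-3) have "triangle Ls a1 a2 a3"
    unfolding triangle_def collinear_def by blast
  then have "triangle (compl_lines Ls H) a1 a2 a3"
    using triangle_compl_lines_iff[of a1 H a2 a3 Ls] a by simp
  moreover have "hpar H N1 L1" "hpar H N2 L2" "hpar H N3 L3"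
    using hpar_iff[OF hyp N1(1) N_off(1) L(1,4)] hpar_iff[OF hyp N2(1) N_off(2) L(2,5)]
      hpar_iff[OF hyp N3(1) N_off(3) L(3,6)] N1 N2 N3 by blast+
  ultimately show "parallel_affine_triangle S Ls H L1 L2 L3"
    unfolding parallel_affine_triangle_def using a N1(1-3) N2(1-3) N3(1-3) N_off
    by blast
next
  assume "parallel_affine_triangle S Ls H L1 L2 L3"
  then obtain a1 a2 a3 K1 K2 K3 where a: "a1 \<in> S - H" "a2 \<in> S - H" "a3 \<in> S - H"
    and tri: "triangle (compl_lines Ls H) a1 a2 a3"
    and K: "K1 \<in> Ls" "K2 \<in> Ls" "K3 \<in> Ls" "\<not> K1 \<subseteq> H" "\<not> K2 \<subseteq> H" "\<not> K3 \<subseteq> H"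
    and on: "a2 \<in> K1" "a3 \<in> K1" "a1 \<in> K2" "a3 \<in> K2" "a1 \<in> K3" "a2 \<in> K3"
    and par: "hpar H K1 L1" "hpar H K2 L2" "hpar H K3 L3"
    unfolding parallel_affine_triangle_def by blast
  have "inf_pt H L1 \<in> K1" "inf_pt H L2 \<in> K2" "inf_pt H L3 \<in> K3"
    using hpar_iff[OF hyp K(1,4) L(1,4)] hpar_iff[OF hyp K(2,5) L(2,5)]
      hpar_iff[OF hyp K(3,6) L(3,6)] par by blast+
  moreover have "a1 \<noteq> a2" "a2 \<noteq> a3" "a1 \<noteq> a3" using tri unfolding triangle_def by simp_all
  ultimately show "affine_triangle_through S Ls H (inf_pt H L1) (inf_pt H L2) (inf_pt H L3)"
    unfolding affine_triangle_through_def using a K(1-3) on by blast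
qed

theorem proposition2p5:
  fixes S :: "'a set" and Ls :: "'a set set" and H :: "'a set"
  assumes gamma: "gamma_space S Ls"
    and veb: "veblenian S Ls"
    and thick: "\<forall>L\<in>Ls. \<exists>x y z. x \<in> L \<and> y \<in> L \<and> z \<in> L \<and> x \<noteq> y \<and> y \<noteq> z \<and> x \<noteq> z"
    and flap: "flappy S Ls H"
  shows
    "(\<forall>p1 p2 p3. p1 \<in> H \<and> p2 \<in> H \<and> p3 \<in> H \<and> p1 \<noteq> p2 \<and> p2 \<noteq> p3 \<and> p1 \<noteq> p3 \<longrightarrow>
        ((\<exists>L\<in>Ls. p1 \<in> L \<and> p2 \<in> L \<and> p3 \<in> L) \<longleftrightarrow>
         (\<exists>a1 a2 a3. a1 \<in> S - H \<and> a2 \<in> S - H \<and> a3 \<in> S - H \<and>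
            a1 \<noteq> a2 \<and> a2 \<noteq> a3 \<and> a1 \<noteq> a3 \<and>
            (\<exists>L\<in>Ls. a2 \<in> L \<and> a3 \<in> L \<and> p1 \<in> L) \<and>
            (\<exists>L\<in>Ls. a1 \<in> L \<and> a3 \<in> L \<and> p2 \<in> L) \<and>
            (\<exists>L\<in>Ls. a1 \<in> L \<and> a2 \<in> L \<and> p3 \<in> L)))) \<and>
     (\<forall>L1 L2 L3. L1 \<in> Ls \<and> L2 \<in> Ls \<and> L3 \<in> Ls \<and>
        \<not> L1 \<subseteq> H \<and> \<not> L2 \<subseteq> H \<and> \<not> L3 \<subseteq> H \<and>
        inf_pt H L1 \<noteq> inf_pt H L2 \<and> inf_pt H L2 \<noteq> inf_pt H L3 \<and> inf_pt H L1 \<noteq> inf_pt H L3 \<longrightarrow>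
        ((\<exists>L\<in>Ls. inf_pt H L1 \<in> L \<and> inf_pt H L2 \<in> L \<and> inf_pt H L3 \<in> L) \<longleftrightarrow>
         (\<exists>a1 a2 a3 K1 K2 K3.
            a1 \<in> S - H \<and> a2 \<in> S - H \<and> a3 \<in> S - H \<and>
            triangle (compl_lines Ls H) a1 a2 a3 \<and>
            K1 \<in> Ls \<and> K2 \<in> Ls \<and> K3 \<in> Ls \<and>
            \<not> K1 \<subseteq> H \<and> \<not> K2 \<subseteq> H \<and> \<not> K3 \<subseteq> H \<and>
            a2 \<in> K1 - H \<and> a3 \<in> K1 - H \<and>
            a1 \<in> K2 - H \<and> a3 \<in> K2 - H \<and>
            a1 \<in> K3 - H \<and> a2 \<in> K3 - H \<and>
            hpar H K1 L1 \<and> hpar H K2 L2 \<and> hpar H K3 L3)))"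
proof -
  have hyp: "hyperplane S Ls H" using flap by (rule flappy_hyperplane)
  have pls: "partial_linear_space S Ls" using gamma by (rule gamma_space_partial_linear_space)
  have collinear_iff: "(\<exists>L\<in>Ls. p1 \<in> L \<and> p2 \<in> L \<and> p3 \<in> L) \<longleftrightarrow> affine_triangle_through S Ls H p1 p2 p3"
    if "p1 \<in> H" "p2 \<in> H" "p3 \<in> H" "p1 \<noteq> p2" "p2 \<noteq> p3" "p1 \<noteq> p3" for p1 p2 p3
    using collinear_imp_affine_triangle_through[OF gamma veb thick flap that]
      affine_triangle_through_imp_collinear[OF gamma veb hyp that] by blast
  show ?thesis
    unfolding affine_triangle_through_def[symmetric] parallel_affine_triangle_def[symmetric]
  proof (intro conjI allI impI; elim conjE)
    fix p1 p2 p3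
    assume "p1 \<in> H" "p2 \<in> H" "p3 \<in> H" "p1 \<noteq> p2" "p2 \<noteq> p3" "p1 \<noteq> p3"
    then show "(\<exists>L\<in>Ls. p1 \<in> L \<and> p2 \<in> L \<and> p3 \<in> L) \<longleftrightarrow> affine_triangle_through S Ls H p1 p2 p3"
      by (rule collinear_iff)
  next
    fix L1 L2 L3
    assume L: "L1 \<in> Ls" "L2 \<in> Ls" "L3 \<in> Ls" "\<not> L1 \<subseteq> H" "\<not> L2 \<subseteq> H" "\<not> L3 \<subseteq> H"
      and q: "inf_pt H L1 \<noteq> inf_pt H L2" "inf_pt H L2 \<noteq> inf_pt H L3" "inf_pt H L1 \<noteq> inf_pt H L3"
    have "inf_pt H L1 \<in> H" "inf_pt H L2 \<in> H" "inf_pt H L3 \<in> H"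
      using inf_pt_mem(2)[OF hyp] L by simp_all
    with q show "(\<exists>L\<in>Ls. inf_pt H L1 \<in> L \<and> inf_pt H L2 \<in> L \<and> inf_pt H L3 \<in> L) \<longleftrightarrow>
        parallel_affine_triangle S Ls H L1 L2 L3"
      using collinear_iff affine_triangle_through_inf_pt_iff[OF pls hyp L q(3)] by simp
  qed
qed

end
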